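(* Let $\mathcal{X}\subset\mathbb{R}$ be compact and let $p$ be a continuous probability density on $\mathcal{X}$. Assume there exists $\delta>0$ with $\inf_{x\in\mathcal{X}}p(x)>\delta$. Then for every $\epsilon>0$ there exist an integer $N\ge1$ and real constants $\mu_i\in\mathbb{R}$, $\sigma_i>0$ ($i=1,\dots,N$) such that, with $$f_N(x)=\frac{1}{N}\sum_{i=1}^N \frac{e^{-\frac{x-\mu_i}{\sigma_i}}}{\sigma_i\left(1+e^{-\frac{x-\mu_i}{\sigma_i}}\right)^2},$$ one has $\mathrm{KL}(p\,\|\,f_N)=\int_{\mathcal{X}}p(x)\log\frac{p(x)}{f_N(x)}\,dx<\epsilon$.
   Context: $\mathrm{KL}(p\|q)=\int p\log(p/q)$ denotes the Kullback–Leibler divergence. $f_N$ is the density on $\mathbb{R}$ of an equally weighted mixture of $N$ logistic distributions with locations $\mu_i$ and scales $\sigma_i$. *)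

theory Defs
  imports "HOL-Analysis.Analysis"
begin

definition logistic_pdf :: "real \<Rightarrow> real \<Rightarrow> real \<Rightarrow> real" where
  "logistic_pdf mu s x = exp (- (x - mu) / s) / (s * (1 + exp (- (x - mu) / s))^2)"

definition logistic_mixture :: "nat \<Rightarrow> (nat \<Rightarrow> real) \<Rightarrow> (nat \<Rightarrow> real) \<Rightarrow> real \<Rightarrow> real" where
  "logistic_mixture N mu s x = (1 / real N) * (\<Sum>i=1..N. logistic_pdf (mu i) (s i) x)"

end

theory Submission
  imports Defs
begin

text \<open>Since \<open>KL(p \<parallel> f) \<le> - ln c\<close> whenever \<open>c p \<le> f\<close> on \<open>X\<close>, it suffices to bound \<open>p\<close>
  from below by logistic mixtures with \<open>c\<close> arbitrarily close to 1. Choose a fine grid \<open>\<int> d\<close>,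
  a sample point \<open>z\<^sub>k \<in> X\<close> near each grid point \<open>k d\<close> close to \<open>X\<close>, and put about
  \<open>M d p(z\<^sub>k)\<close> components of common scale \<open>A d\<close> at \<open>k d\<close>. At \<open>x \<in> X\<close> the \<open>2m+1\<close> kernels
  nearest to \<open>x\<close> form a Riemann sum for the logistic mass of \<open>[-L, L]\<close>, and by continuity each
  carries weight \<open>\<approx> M d p(x)\<close>, so together they contribute about \<open>M p(x)\<close>. The number of
  components is about \<open>M \<cdot> d \<Sum>\<^sub>k p(z\<^sub>k) \<approx> M \<integral>\<^sub>X p = M\<close>; bounding this sample sum needs an
  open \<open>T \<supseteq> X\<close> of almost the same measure. The hypothesis \<open>p > \<delta>\<close> makes all continuity
  errors relative to \<open>p\<close>.\<close>

definition sigmoid :: "real \<Rightarrow> real" where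
  "sigmoid t = 1 / (1 + exp (- t))"

lemma one_plus_exp_pos: "1 + exp x > (0::real)"
  by (simp add: add_pos_pos)

lemma logistic_pdf_pos: "s > 0 \<Longrightarrow> logistic_pdf mu s x > 0"
  unfolding logistic_pdf_def using one_plus_exp_pos
  by (intro divide_pos_pos mult_pos_pos zero_less_power) auto

lemma logistic_pdf_eq_standard:
  "s > 0 \<Longrightarrow> logistic_pdf mu s x = logistic_pdf 0 1 ((x - mu) / s) / s"
  unfolding logistic_pdf_def by (simp add: minus_divide_left)

lemma continuous_on_logistic_pdf: "s > 0 \<Longrightarrow> continuous_on S (logistic_pdf mu s)"
  unfolding logistic_pdf_def using one_plus_exp_pos
  by (intro continuous_intros) (auto simp: add_nonneg_eq_0_iff)

lemma continuous_on_logistic_mixture: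
  "(\<And>i. i \<in> {1..N} \<Longrightarrow> s i > 0) \<Longrightarrow> continuous_on S (logistic_mixture N mu s)"
  unfolding logistic_mixture_def by (intro continuous_intros continuous_on_logistic_pdf) auto

lemma sigmoid_mono: "a \<le> b \<Longrightarrow> sigmoid a \<le> sigmoid b"
  unfolding sigmoid_def by (simp add: frac_le add_pos_pos)

lemma sigmoid_minus_sigmoid_uminus: "sigmoid L - sigmoid (- L) = 1 - 2 / (1 + exp L)"
proof -
  define e where "e = exp L"
  have e: "e > 0" unfolding e_def by (rule exp_gt_zero)
  have "sigmoid L = e / (1 + e)" "sigmoid (- L) = 1 / (1 + e)"
    unfolding sigmoid_def e_def exp_minus using e by (simp_all add: field_simps)
  then show ?thesis unfolding e_def[symmetric] using e by (simp add: field_simps)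
qed

lemma DERIV_sigmoid: "DERIV sigmoid t :> logistic_pdf 0 1 t"
proof -
  have "1 + exp (- t) \<noteq> 0"
    using one_plus_exp_pos by (metis less_irrefl)
  then show ?thesis
    unfolding sigmoid_def logistic_pdf_def
    by (auto intro!: derivative_eq_intros simp: power2_eq_square)
qed

lemma DERIV_std_logistic_pdf:
  "DERIV (logistic_pdf 0 1) t :> exp (- t) * (exp (- t) - 1) / (1 + exp (- t))^3"
proof (rule DERIV_cong)
  define e where "e = exp (- t)"
  have e: "1 + e \<noteq> 0"
    unfolding e_def using one_plus_exp_pos by (metis less_irrefl)
  then show "DERIV (logistic_pdf 0 1) t :>
      (- e * (1 + e)^2 - e * (2 * (1 + e) * - e)) / ((1 + e)^2)^2"
    unfolding logistic_pdf_def e_def by (auto intro!: derivative_eq_intros)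
  have "- e * (1 + e)^2 - e * (2 * (1 + e) * - e) = e * (e - 1) * (1 + e)"
    and "((1 + e)^2)^2 = (1 + e)^3 * (1 + e)"
    by algebra+
  then show "(- e * (1 + e)^2 - e * (2 * (1 + e) * - e)) / ((1 + e)^2)^2 =
      e * (e - 1) / (1 + e)^3"
    using e by simp
qed

lemma abs_deriv_std_logistic_pdf_le:
  fixes t :: real
  shows "\<bar>exp (- t) * (exp (- t) - 1) / (1 + exp (- t))^3\<bar> \<le> 1"
proof -
  define e where "e = exp (- t)"
  have e: "e > 0" unfolding e_def by (rule exp_gt_zero)
  have "\<bar>e * (e - 1)\<bar> \<le> e * (e + 1)" using e by (simp add: abs_mult abs_le_iff)
  also have "\<dots> \<le> (1 + e)^3" using e by (simp add: power3_eq_cube algebra_simps)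
  finally show ?thesis using e unfolding e_def[symmetric]
    by (simp add: abs_div pos_divide_le_eq)
qed

text \<open>Two mean value steps: the increment of the sigmoid over a step of length \<open>h\<close> is its
  derivative at the right end times \<open>h\<close>, up to \<open>h\<^sup>2\<close> since the second derivative is bounded by 1.\<close>
lemma sigmoid_increment_le:
  assumes "h > 0"
  shows "sigmoid u - sigmoid (u - h) \<le> h * logistic_pdf 0 1 u + h^2"
proof -
  obtain z where z: "u - h < z" "z < u" "sigmoid u - sigmoid (u - h) = h * logistic_pdf 0 1 z"
    using MVT2[of "u - h" u sigmoid "logistic_pdf 0 1"] assms DERIV_sigmoid by auto
  obtain w where w: "z < w" "w < u" "logistic_pdf 0 1 u - logistic_pdf 0 1 z =
      (u - z) * (exp (- w) * (exp (- w) - 1) / (1 + exp (- w))^3)"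
    using MVT2[of z u "logistic_pdf 0 1" "\<lambda>t. exp (- t) * (exp (- t) - 1) / (1 + exp (- t))^3"]
      z DERIV_std_logistic_pdf by auto
  have "\<bar>logistic_pdf 0 1 u - logistic_pdf 0 1 z\<bar> \<le> (u - z) * 1"
    unfolding w(3) abs_mult using z abs_deriv_std_logistic_pdf_le[of w]
    by (intro mult_mono) auto
  then have "logistic_pdf 0 1 z \<le> logistic_pdf 0 1 u + h" using z by auto
  then have "h * logistic_pdf 0 1 z \<le> h * (logistic_pdf 0 1 u + h)"
    using assms by (simp add: mult_left_mono)
  then show ?thesis using z(3) by (simp add: power2_eq_square algebra_simps)
qed

lemma floor_window_dist:
  fixes d x :: real
  assumes "d > 0" "j \<le> 2 * m"
  shows "\<bar>x - of_int (\<lfloor>x / d\<rfloor> - int m + int j) * d\<bar> \<le> (real m + 1) * d"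
proof -
  have grid: "of_int (\<lfloor>x / d\<rfloor> - int m + int j) * d = of_int \<lfloor>x / d\<rfloor> * d - real m * d + real j * d"
    and r: "(real m + 1) * d = real m * d + d"
    and up: "(of_int \<lfloor>x / d\<rfloor> + 1) * d = of_int \<lfloor>x / d\<rfloor> * d + d"
    by (simp_all add: algebra_simps)
  have "0 \<le> real j * d" "real j * d \<le> 2 * real m * d"
    using assms by (simp_all add: mult_right_mono)
  then show ?thesis
    using floor_divide_lower[OF assms(1), of x] floor_divide_upper[OF assms(1), of x]
    unfolding grid r up abs_le_iff by linarith
qed

text \<open>Riemann-sum estimate for the kernels \<open>d \<cdot> logistic_pdf (k d) (A d)\<close>: on the \<open>2m+1\<close> grid
  points nearest to \<open>x\<close> they telescope to the sigmoid mass of \<open>[-L, L]\<close>, up to one \<open>A\<^sup>-\<^sup>2\<close>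
  per term.\<close>
lemma logistic_window_sum_ge:
  fixes d A L x :: real
  assumes d: "d > 0" and A: "A > 0" and m: "L * A \<le> real m"
  shows "1 - 2 / (1 + exp L) - real (2 * m + 1) / A^2 \<le>
    (\<Sum>j\<le>2 * m. d * logistic_pdf (of_int (\<lfloor>x / d\<rfloor> - int m + int j) * d) (A * d) x)"
proof -
  define k0 where "k0 = \<lfloor>x / d\<rfloor>"
  define u where "u j = (x - of_int (k0 - int m + int j) * d) / (A * d)" for j :: nat
  define h where "h = 1 / A"
  have h: "h > 0" using A by (simp add: h_def)
  have Ad: "A * d > 0" using A d by simp
  have u_Suc: "u (Suc j) = u j - h" for j
    unfolding u_def h_def using d A by (simp add: field_simps)
  have term_eq:
    "d * logistic_pdf (of_int (k0 - int m + int j) * d) (A * d) x = h * logistic_pdf 0 1 (u j)" for j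
    unfolding logistic_pdf_eq_standard[OF Ad] u_def h_def using d by simp
  have "real m / A \<ge> L" using m A by (simp add: pos_le_divide_eq)
  moreover have "u 0 = (x - of_int k0 * d) / (A * d) + real m / A"
    and "u (2 * m + 1) = (x - (of_int k0 + 1) * d) / (A * d) - real m / A"
    unfolding u_def using d A by (simp_all add: field_simps)
  moreover have "(x - of_int k0 * d) / (A * d) \<ge> 0" "(x - (of_int k0 + 1) * d) / (A * d) \<le> 0"
    using floor_divide_lower[OF d, of x] floor_divide_upper[OF d, of x] Ad
    unfolding k0_def by (simp_all add: divide_nonpos_pos)
  ultimately have ends: "L \<le> u 0" "u (2 * m + 1) \<le> - L" by linarith+
  have "1 - 2 / (1 + exp L) - real (2 * m + 1) * h^2 \<le>
      sigmoid (u 0) - sigmoid (u (2 * m + 1)) - real (2 * m + 1) * h^2"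
    using sigmoid_mono[OF ends(1)] sigmoid_mono[OF ends(2)] sigmoid_minus_sigmoid_uminus[of L]
    by linarith
  also have "\<dots> = (\<Sum>j<2 * m + 1. sigmoid (u j) - sigmoid (u (Suc j)) - h^2)"
    using sum_lessThan_telescope'[of "sigmoid \<circ> u" "2 * m + 1"] by (simp add: sum_subtractf)
  also have "\<dots> \<le> (\<Sum>j<2 * m + 1. h * logistic_pdf 0 1 (u j))"
  proof (rule sum_mono)
    show "sigmoid (u j) - sigmoid (u (Suc j)) - h^2 \<le> h * logistic_pdf 0 1 (u j)" for j
      using sigmoid_increment_le[OF h, of "u j"] unfolding u_Suc by simp
  qed
  also have "\<dots> = (\<Sum>j\<le>2 * m. d * logistic_pdf (of_int (k0 - int m + int j) * d) (A * d) x)"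
    using term_eq by (simp add: lessThan_Suc_atMost)
  finally show ?thesis unfolding k0_def h_def by (simp add: power_divide)
qed

lemma exists_logistic_window:
  assumes "\<eta> > 0"
  obtains A :: real and m :: nat where "A > 0" and
    "\<And>d x. d > 0 \<Longrightarrow> 1 - 2 * \<eta> \<le>
      (\<Sum>j\<le>2 * m. d * logistic_pdf (of_int (\<lfloor>x / d\<rfloor> - int m + int j) * d) (A * d) x)"
proof -
  obtain L0 :: nat where L0: "2 / \<eta> \<le> real L0"
    using real_arch_simple by blast
  define L where "L = Suc L0"
  have L: "2 / \<eta> \<le> real L" "L \<ge> 1" using L0 by (simp_all add: L_def)
  obtain A0 :: nat where A0: "3 * real L / \<eta> \<le> real A0"
    using real_arch_simple by blast
  define A where "A = Suc A0"
  have A: "3 * real L / \<eta> \<le> real A" "A \<ge> 1" using A0 by (simp_all add: A_def)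
  have tail: "2 / (1 + exp (real L)) \<le> \<eta>"
  proof -
    have "2 / \<eta> \<le> 1 + exp (real L)" using exp_ge_add_one_self[of "real L"] L by linarith
    then show ?thesis using assms one_plus_exp_pos by (simp add: divide_le_eq mult.commute)
  qed
  have error: "real (2 * (A * L) + 1) / real A^2 \<le> \<eta>"
  proof -
    have "1 \<le> A * L" using A(2) L(2) by simp
    then have "1 \<le> real A * real L" by (metis of_nat_1 of_nat_le_iff of_nat_mult)
    then have "real (2 * (A * L) + 1) \<le> 3 * real A * real L" by simp
    also have "\<dots> \<le> \<eta> * real A^2"
    proof -
      have "3 * real L \<le> \<eta> * real A" using A(1) assms by (simp add: divide_le_eq mult.commute)
      then have "3 * real L * real A \<le> \<eta> * real A * real A" by (simp add: mult_right_mono)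
      then show ?thesis by (simp add: power2_eq_square algebra_simps)
    qed
    finally show ?thesis using A(2) by (simp add: divide_le_eq mult.commute)
  qed
  show ?thesis
  proof (rule that)
    show "real A > 0" using A(2) by simp
    fix d x :: real assume "d > 0"
    moreover have "real L * real A \<le> real (A * L)" by simp
    ultimately show "1 - 2 * \<eta> \<le> (\<Sum>j\<le>2 * (A * L). d * logistic_pdf
        (of_int (\<lfloor>x / d\<rfloor> - int (A * L) + int j) * d) (real A * d) x)"
      using logistic_window_sum_ge[of d "real A" "real L" "A * L" x] A(2) tail error
      by linarith
  qed
qed

lemma finite_grid_indices_near:
  fixes X :: "real set"
  assumes "bounded X" "d > 0"
  shows "finite {k :: int. \<exists>z\<in>X. \<bar>z - of_int k * d\<bar> \<le> r}"
proof -
  obtain B where B: "\<And>x. x \<in> X \<Longrightarrow> \<bar>x\<bar> \<le> B"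
    using assms(1) bounded_iff by (metis real_norm_def)
  have "{k :: int. \<exists>z\<in>X. \<bar>z - of_int k * d\<bar> \<le> r} \<subseteq> {\<lfloor>- (B + r) / d\<rfloor>..\<lceil>(B + r) / d\<rceil>}"
  proof
    fix k assume "k \<in> {k :: int. \<exists>z\<in>X. \<bar>z - of_int k * d\<bar> \<le> r}"
    then obtain z where "z \<in> X" "\<bar>z - of_int k * d\<bar> \<le> r" by blast
    then have "\<bar>of_int k * d\<bar> \<le> B + r" using B by fastforce
    then have "- (B + r) / d \<le> of_int k" "of_int k \<le> (B + r) / d"
      using assms(2) by (simp_all add: pos_divide_le_eq pos_le_divide_eq abs_le_iff)
    then show "k \<in> {\<lfloor>- (B + r) / d\<rfloor>..\<lceil>(B + r) / d\<rceil>}"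
      by (simp add: floor_le_iff le_ceiling_iff)
  qed
  then show ?thesis by (rule finite_subset) simp
qed

lemma exists_grid_samples:
  fixes X :: "real set"
  assumes "bounded X" "d > 0"
  obtains J :: "int set" and z :: "int \<Rightarrow> real" where "finite J"
    "\<And>k. k \<in> J \<Longrightarrow> z k \<in> X" "\<And>k. k \<in> J \<Longrightarrow> \<bar>z k - of_int k * d\<bar> \<le> r"
    "\<And>x k. x \<in> X \<Longrightarrow> \<bar>x - of_int k * d\<bar> \<le> r \<Longrightarrow> k \<in> J"
proof
  define J where "J = {k :: int. \<exists>z\<in>X. \<bar>z - of_int k * d\<bar> \<le> r}"
  show "finite J"
    unfolding J_def using finite_grid_indices_near[OF assms] .
  define z where "z k = (SOME z. z \<in> X \<and> \<bar>z - of_int k * d\<bar> \<le> r)" for k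
  show "z k \<in> X" "\<bar>z k - of_int k * d\<bar> \<le> r" if "k \<in> J" for k
    using someI_ex[of "\<lambda>z. z \<in> X \<and> \<bar>z - of_int k * d\<bar> \<le> r"] that
    unfolding J_def z_def by auto
  show "k \<in> J" if "x \<in> X" "\<bar>x - of_int k * d\<bar> \<le> r" for x k
    unfolding J_def using that by blast
qed

lemma sum_step_le_integral:
  fixes a :: "int \<Rightarrow> real" and g :: "real \<Rightarrow> real"
  assumes "finite J" "d > 0" "g integrable_on UNIV" "\<And>y. 0 \<le> g y"
    and "\<And>y. \<lfloor>y / d\<rfloor> \<in> J \<Longrightarrow> a \<lfloor>y / d\<rfloor> \<le> g y"
  shows "d * (\<Sum>k\<in>J. a k) \<le> integral UNIV g"
proof -
  define cell where "cell k = {of_int k * d..<of_int k * d + d}" for k :: int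
  define step where "step y = (\<Sum>k\<in>J. a k * indicator (cell k) y)" for y
  have cell_lmeasurable: "cell k \<in> lmeasurable" for k
    unfolding cell_def by (simp add: measurable_convex)
  have indicator_integrable: "(indicator (cell k) :: real \<Rightarrow> real) integrable_on UNIV" for k
    using cell_lmeasurable by (simp add: integrable_on_indicator)
  have "integral UNIV (indicator (cell k) :: real \<Rightarrow> real) = d" for k
    using lmeasure_integral_UNIV[OF cell_lmeasurable] assms(2) by (simp add: cell_def)
  then have step_integral: "integral UNIV step = d * (\<Sum>k\<in>J. a k)"
    unfolding step_def using assms(1) indicator_integrable
    by (subst integral_sum) (auto simp: integrable_on_mult_right sum_distrib_left mult.commute)
  have in_cell: "y \<in> cell k \<longleftrightarrow> k = \<lfloor>y / d\<rfloor>" for y k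
  proof -
    have "y \<in> cell k \<longleftrightarrow> of_int k \<le> y / d \<and> y / d < of_int k + 1"
      unfolding cell_def using assms(2)
      by (simp add: pos_le_divide_eq pos_divide_less_eq algebra_simps)
    also have "\<dots> \<longleftrightarrow> \<lfloor>y / d\<rfloor> = k" by (simp add: floor_eq_iff)
    finally show ?thesis by auto
  qed
  have "step y = (if \<lfloor>y / d\<rfloor> \<in> J then a \<lfloor>y / d\<rfloor> else 0)" for y
    unfolding step_def indicator_def in_cell using assms(1) by (simp add: sum.delta' eq_commute)
  then have "step y \<le> g y" for y
    using assms(4,5) by simp
  moreover have "step integrable_on UNIV"
    unfolding step_def using assms(1) indicator_integrable
    by (intro integrable_sum integrable_on_mult_right)
  ultimately show ?thesis
    using integral_le[OF _ assms(3)] step_integral by metis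
qed

lemma sample_sum_le_integral:
  fixes a :: "int \<Rightarrow> real" and p :: "real \<Rightarrow> real"
  assumes "finite J" "d > 0" "p integrable_on X" "\<And>x. x \<in> X \<Longrightarrow> 0 \<le> p x"
    and "T - X \<in> lmeasurable" "0 \<le> K" "0 \<le> \<eta>" "\<And>k. k \<in> J \<Longrightarrow> a k \<le> K"
    and "\<And>y. \<lfloor>y / d\<rfloor> \<in> J \<Longrightarrow> y \<in> X \<Longrightarrow> a \<lfloor>y / d\<rfloor> \<le> (1 + \<eta>) * p y"
    and "\<And>y. \<lfloor>y / d\<rfloor> \<in> J \<Longrightarrow> y \<notin> X \<Longrightarrow> y \<in> T"
  shows "d * (\<Sum>k\<in>J. a k) \<le> (1 + \<eta>) * integral X p + K * measure lebesgue (T - X)"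
proof -
  define g where "g y = (1 + \<eta>) * (if y \<in> X then p y else 0) + K * indicator (T - X) y" for y
  have p_integrable: "(\<lambda>y. if y \<in> X then p y else 0) integrable_on UNIV"
    using assms(3) by (simp add: integrable_restrict_UNIV)
  have indicator_integrable: "(indicator (T - X) :: real \<Rightarrow> real) integrable_on UNIV"
    using assms(5) by (simp add: integrable_on_indicator)
  have "d * (\<Sum>k\<in>J. a k) \<le> integral UNIV g"
  proof (rule sum_step_le_integral[OF assms(1,2)])
    show "g integrable_on UNIV"
      unfolding g_def using p_integrable indicator_integrable
      by (intro integrable_add integrable_on_mult_right)
    show "0 \<le> g y" for y
      unfolding g_def using assms(4,6,7) by (simp add: indicator_def)
    show "a \<lfloor>y / d\<rfloor> \<le> g y" if "\<lfloor>y / d\<rfloor> \<in> J" for y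
      using assms(4,6,7) assms(8-10)[OF that] by (cases "y \<in> X") (auto simp: g_def)
  qed
  also have "integral UNIV g = (1 + \<eta>) * integral X p + K * measure lebesgue (T - X)"
    unfolding g_def using p_integrable indicator_integrable
    by (simp add: integral_add integrable_on_mult_right integral_restrict_UNIV
        lmeasure_integral_UNIV[OF assms(5)])
  finally show ?thesis .
qed

lemma uniformly_continuous_relative_modulus:
  fixes p :: "real \<Rightarrow> real"
  assumes "compact X" "continuous_on X p" "\<delta> > 0" "\<And>x. x \<in> X \<Longrightarrow> \<delta> \<le> p x" "\<eta> > 0"
  obtains \<rho> where "\<rho> > 0"
    "\<And>x y. x \<in> X \<Longrightarrow> y \<in> X \<Longrightarrow> \<bar>y - x\<bar> < \<rho> \<Longrightarrow> \<bar>p y - p x\<bar> \<le> \<eta> * p x"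
proof -
  obtain \<rho> where \<rho>: "\<rho> > 0"
    "\<And>x y. x \<in> X \<Longrightarrow> y \<in> X \<Longrightarrow> dist y x < \<rho> \<Longrightarrow> dist (p y) (p x) < \<eta> * \<delta>"
    using compact_uniformly_continuous[OF assms(2,1)] assms(3,5)
    unfolding uniformly_continuous_on_def by (metis mult_pos_pos)
  have "\<bar>p y - p x\<bar> \<le> \<eta> * p x" if "x \<in> X" "y \<in> X" "\<bar>y - x\<bar> < \<rho>" for x y
  proof -
    have "\<bar>p y - p x\<bar> < \<eta> * \<delta>" using \<rho>(2)[OF that(1,2)] that(3) by (simp add: dist_real_def)
    also have "\<eta> * \<delta> \<le> \<eta> * p x" using assms(4,5) that(1) by simp
    finally show ?thesis by simp
  qed
  then show ?thesis using \<rho>(1) that by blast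
qed

lemma compact_outer_approx:
  fixes X :: "real set"
  assumes "compact X" "e > 0"
  obtains T \<rho> where "T - X \<in> lmeasurable" "measure lebesgue (T - X) < e" "\<rho> > 0"
    "\<And>x y. x \<in> X \<Longrightarrow> \<bar>y - x\<bar> \<le> \<rho> \<Longrightarrow> y \<in> T"
proof -
  obtain T where T: "open T" "X \<subseteq> T" "T - X \<in> lmeasurable" "emeasure lebesgue (T - X) < ennreal e"
    using sets_lebesgue_outer_open[of X e] lmeasurable_compact[OF assms(1)] assms(2)
    by (auto simp: fmeasurableD)
  moreover obtain \<rho> where "\<rho> > 0" "(\<Union>x\<in>X. cball x \<rho>) \<subseteq> T"
    using compact_subset_open_imp_cball_epsilon_subset[OF assms(1) T(1,2)] by blast
  ultimately show ?thesis
    using that[of T \<rho>] assms(2)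
    by (force simp: emeasure_eq_measure2 ennreal_less_iff dist_real_def abs_minus_commute)
qed

lemma exists_sampling_grid:
  fixes X :: "real set" and p :: "real \<Rightarrow> real"
  assumes "compact X" "continuous_on X p" "\<delta> > 0" "\<And>x. x \<in> X \<Longrightarrow> \<delta> \<le> p x"
    and "p integrable_on X" "integral X p = 1" "\<eta> > 0"
  obtains d :: real and J :: "int set" and z :: "int \<Rightarrow> real"
  where "d > 0" "finite J" "\<And>k. k \<in> J \<Longrightarrow> z k \<in> X"
    and "\<And>x j. x \<in> X \<Longrightarrow> j \<le> 2 * m \<Longrightarrow> \<lfloor>x / d\<rfloor> - int m + int j \<in> J"
    and "\<And>x j. x \<in> X \<Longrightarrow> j \<le> 2 * m \<Longrightarrow>
      (1 - \<eta>) * p x \<le> p (z (\<lfloor>x / d\<rfloor> - int m + int j))"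
    and "d * (\<Sum>k\<in>J. p (z k)) \<le> 1 + 2 * \<eta>"
proof -
  obtain \<rho> where \<rho>: "\<rho> > 0"
    "\<And>x y. x \<in> X \<Longrightarrow> y \<in> X \<Longrightarrow> \<bar>y - x\<bar> < \<rho> \<Longrightarrow> \<bar>p y - p x\<bar> \<le> \<eta> * p x"
    using uniformly_continuous_relative_modulus[OF assms(1-4,7)] by blast
  obtain K where K: "K > 0" "\<forall>y\<in>p ` X. norm y \<le> K"
    using compact_imp_bounded[OF compact_continuous_image[OF assms(2,1)]] bounded_pos by blast
  then have p_le_K: "p x \<le> K" if "x \<in> X" for x
    using that by (force simp: abs_le_iff)
  obtain T \<rho>' where T: "T - X \<in> lmeasurable" "measure lebesgue (T - X) < \<eta> / K"
    and \<rho>': "\<rho>' > 0" "\<And>x y. x \<in> X \<Longrightarrow> \<bar>y - x\<bar> \<le> \<rho>' \<Longrightarrow> y \<in> T"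
    using compact_outer_approx[OF assms(1), of "\<eta> / K"] assms(7) K(1) by auto
  have "K * measure lebesgue (T - X) \<le> \<eta>"
    using T(2) K(1) by (simp add: pos_less_divide_eq mult.commute)
  define d where "d = min \<rho> \<rho>' / (4 * (real m + 1))"
  define r where "r = (real m + 1) * d"
  have d: "d > 0" using \<rho>(1) \<rho>'(1) by (simp add: d_def)
  have "2 * r = min \<rho> \<rho>' / 2" by (simp add: r_def d_def field_simps)
  then have r: "2 * r < \<rho>" "2 * r \<le> \<rho>'" "d \<le> r"
    using \<rho>(1) \<rho>'(1) d by (auto simp: r_def)
  obtain J z where finite_J: "finite J" and z: "\<And>k. k \<in> J \<Longrightarrow> z k \<in> X"
    "\<And>k. k \<in> J \<Longrightarrow> \<bar>z k - of_int k * d\<bar> \<le> r"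
    and J: "\<And>x k. x \<in> X \<Longrightarrow> \<bar>x - of_int k * d\<bar> \<le> r \<Longrightarrow> k \<in> J"
    using exists_grid_samples[OF compact_imp_bounded[OF assms(1)] d] by blast
  have window: "\<lfloor>x / d\<rfloor> - int m + int j \<in> J" "(1 - \<eta>) * p x \<le> p (z (\<lfloor>x / d\<rfloor> - int m + int j))"
    if "x \<in> X" "j \<le> 2 * m" for x j
  proof -
    show k: "\<lfloor>x / d\<rfloor> - int m + int j \<in> J"
      using J[OF that(1)] floor_window_dist[OF d that(2), of x] by (simp add: r_def)
    have "\<bar>z (\<lfloor>x / d\<rfloor> - int m + int j) - x\<bar> < \<rho>"
      using z(2)[OF k] floor_window_dist[OF d that(2), of x] r(1) by (simp add: r_def)
    then show "(1 - \<eta>) * p x \<le> p (z (\<lfloor>x / d\<rfloor> - int m + int j))"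
      using \<rho>(2)[OF that(1) z(1)[OF k]] by (simp add: algebra_simps abs_le_iff)
  qed
  have "d * (\<Sum>k\<in>J. p (z k)) \<le> (1 + \<eta>) * integral X p + K * measure lebesgue (T - X)"
  proof (rule sample_sum_le_integral[where T = T])
    fix y assume y: "\<lfloor>y / d\<rfloor> \<in> J"
    then have "\<bar>y - z \<lfloor>y / d\<rfloor>\<bar> < 2 * r"
      using z(2)[OF y] floor_divide_lower[OF d, of y] floor_divide_upper[OF d, of y] r(3)
      by (simp add: abs_le_iff abs_less_iff algebra_simps)
    then show "p (z \<lfloor>y / d\<rfloor>) \<le> (1 + \<eta>) * p y" if "y \<in> X"
      using \<rho>(2)[OF that z(1)[OF y]] r(1) by (simp add: algebra_simps abs_le_iff)
    show "y \<in> T" if "y \<notin> X"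
      using \<open>\<bar>y - z \<lfloor>y / d\<rfloor>\<bar> < 2 * r\<close> r(2) \<rho>'(2)[OF z(1)[OF y], of y] by simp
  qed (use finite_J d assms(3,4,5,7) T(1) K(1) p_le_K z(1) in \<open>auto intro: less_imp_le order_trans\<close>)
  with \<open>K * _ \<le> \<eta>\<close> have "d * (\<Sum>k\<in>J. p (z k)) \<le> 1 + 2 * \<eta>"
    using assms(6) by simp
  with d finite_J z(1) window show ?thesis by (rule that)
qed

lemma sum_enumerate_multiplicities:
  fixes n :: "'a \<Rightarrow> nat" and c :: "'a \<Rightarrow> 'b"
  assumes "finite J"
  shows "\<exists>mu. \<forall>G :: 'b \<Rightarrow> real.
    (\<Sum>i = 1..(\<Sum>k\<in>J. n k). G (mu i)) = (\<Sum>k\<in>J. real (n k) * G (c k))"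
  using assms
proof (induction J rule: finite_induct)
  case empty
  then show ?case by simp
next
  case (insert a J)
  then obtain mu where mu: "\<And>G :: 'b \<Rightarrow> real.
      (\<Sum>i = 1..(\<Sum>k\<in>J. n k). G (mu i)) = (\<Sum>k\<in>J. real (n k) * G (c k))"
    by blast
  define N where "N = (\<Sum>k\<in>J. n k)"
  define mu' where "mu' i = (if i \<le> N then mu i else c a)" for i
  have "(\<Sum>i = 1..N + n a. G (mu' i)) = (\<Sum>k\<in>insert a J. real (n k) * G (c k))" for G :: "'b \<Rightarrow> real"
  proof -
    have "(\<Sum>i = 1..N + n a. G (mu' i)) = (\<Sum>i = 1..N. G (mu' i)) + (\<Sum>i = N + 1..N + n a. G (mu' i))"
      by (rule sum.ub_add_nat) simp
    also have "(\<Sum>i = 1..N. G (mu' i)) = (\<Sum>i = 1..N. G (mu i))"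
      by (simp add: mu'_def)
    also have "(\<Sum>i = N + 1..N + n a. G (mu' i)) = real (n a) * G (c a)"
      by (simp add: mu'_def)
    finally show ?thesis
      using insert mu unfolding N_def by simp
  qed
  then show ?case
    using insert unfolding N_def by (metis add.commute sum.insert)
qed

lemma exists_rounded_weights:
  fixes w :: "'a \<Rightarrow> real"
  assumes "finite J" "J \<noteq> {}" "\<eta> > 0" "\<And>k. k \<in> J \<Longrightarrow> 0 < w k"
  obtains M :: real and n :: "'a \<Rightarrow> nat" where "M > 0" "\<And>k. k \<in> J \<Longrightarrow> M * w k \<le> real (n k)"
    "1 \<le> (\<Sum>k\<in>J. n k)" "real (\<Sum>k\<in>J. n k) \<le> M * (sum w J + \<eta>)"
proof -
  define M where "M = real (card J) / \<eta>"
  define n where "n k = nat \<lceil>M * w k\<rceil>" for k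
  have M: "M > 0" unfolding M_def using assms(1-3) by (simp add: card_gt_0_iff)
  have n: "M * w k \<le> real (n k)" "real (n k) \<le> M * w k + 1" "1 \<le> n k" if "k \<in> J" for k
  proof -
    have "0 < M * w k" using M assms(4)[OF that] by simp
    then show "M * w k \<le> real (n k)" "real (n k) \<le> M * w k + 1" "1 \<le> n k"
      unfolding n_def by linarith+
  qed
  obtain k where "k \<in> J" using assms(2) by blast
  then have N_ge: "1 \<le> (\<Sum>k\<in>J. n k)"
    using n(3) assms(1) by (meson member_le_sum order_trans zero_le)
  have "real (\<Sum>k\<in>J. n k) \<le> (\<Sum>k\<in>J. M * w k + 1)"
    unfolding of_nat_sum by (intro sum_mono n(2))
  also have "\<dots> = M * (sum w J + \<eta>)"
    using assms(3) by (simp add: sum.distrib sum_distrib_left M_def distrib_left)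
  finally have "real (\<Sum>k\<in>J. n k) \<le> M * (sum w J + \<eta>)" .
  from M n(1) N_ge this show ?thesis by (rule that)
qed

lemma lower_bound_after_normalization:
  fixes \<eta> M N P f :: real
  assumes "0 \<le> \<eta>" "\<eta> \<le> 1 / 6" "0 \<le> P" "0 < M" "0 < N" "N \<le> M * (1 + 3 * \<eta>)"
    and "M * ((1 - \<eta>) * (1 - 2 * \<eta>) * P) \<le> N * f"
  shows "(1 - 6 * \<eta>) * P \<le> f"
proof -
  have "(1 - 6 * \<eta>) * P * N \<le> (1 - 6 * \<eta>) * P * (M * (1 + 3 * \<eta>))"
    using assms by (intro mult_left_mono) auto
  also have "\<dots> = ((1 - 6 * \<eta>) * (1 + 3 * \<eta>)) * (M * P)"
    by (simp add: algebra_simps)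
  also have "\<dots> \<le> ((1 - \<eta>) * (1 - 2 * \<eta>)) * (M * P)"
    using assms(1-4) by (intro mult_right_mono) (auto simp: algebra_simps)
  also have "\<dots> \<le> N * f"
    using assms(7) by (simp add: algebra_simps)
  finally show ?thesis
    using assms(5) by (simp add: mult.commute)
qed

lemma logistic_mixture_realizing_weights:
  fixes w c :: "'a \<Rightarrow> real"
  assumes "finite J" "J \<noteq> {}" "\<eta> > 0" "\<And>k. k \<in> J \<Longrightarrow> 0 < w k"
  obtains N :: nat and M :: real and n :: "'a \<Rightarrow> nat" and mu :: "nat \<Rightarrow> real"
  where "N \<ge> 1" "M > 0" "\<And>k. k \<in> J \<Longrightarrow> M * w k \<le> real (n k)" "real N \<le> M * (sum w J + \<eta>)"
    "\<And>x. real N * logistic_mixture N mu (\<lambda>_. s) x =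
      (\<Sum>k\<in>J. real (n k) * logistic_pdf (c k) s x)"
proof -
  obtain M n where M: "M > 0" and n: "\<And>k. k \<in> J \<Longrightarrow> M * w k \<le> real (n k)"
    and N_ge: "1 \<le> (\<Sum>k\<in>J. n k)" and N_le: "real (\<Sum>k\<in>J. n k) \<le> M * (sum w J + \<eta>)"
    by (rule exists_rounded_weights[OF assms]) auto
  obtain mu where mu: "\<And>G :: real \<Rightarrow> real.
      (\<Sum>i = 1..(\<Sum>k\<in>J. n k). G (mu i)) = (\<Sum>k\<in>J. real (n k) * G (c k))"
    using sum_enumerate_multiplicities[OF assms(1), of n c] by blast
  have "real (\<Sum>k\<in>J. n k) * logistic_mixture (\<Sum>k\<in>J. n k) mu (\<lambda>_. s) x =
      (\<Sum>k\<in>J. real (n k) * logistic_pdf (c k) s x)" for x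
  proof -
    have "real (\<Sum>k\<in>J. n k) \<noteq> 0" using N_ge by linarith
    then show ?thesis
      unfolding logistic_mixture_def mu[of "\<lambda>c. logistic_pdf c s x"] by simp
  qed
  with N_ge M n N_le show ?thesis by (rule that)
qed

lemma sum_window_le_sum:
  fixes f :: "int \<Rightarrow> real"
  assumes "finite J" "\<And>k. k \<in> J \<Longrightarrow> 0 \<le> f k" "\<And>j. j \<le> 2 * m \<Longrightarrow> k0 - int m + int j \<in> J"
  shows "(\<Sum>j\<le>2 * m. f (k0 - int m + int j)) \<le> (\<Sum>k\<in>J. f k)"
proof -
  have "inj_on (\<lambda>j. k0 - int m + int j) {..2 * m}" by (auto simp: inj_on_def)
  then have "(\<Sum>j\<le>2 * m. f (k0 - int m + int j)) = (\<Sum>k\<in>(\<lambda>j. k0 - int m + int j) ` {..2 * m}. f k)"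
    by (simp add: sum.reindex)
  also have "\<dots> \<le> (\<Sum>k\<in>J. f k)"
    using assms by (intro sum_mono2) auto
  finally show ?thesis .
qed

lemma weighted_kernel_sum_ge_window:
  fixes n :: "int \<Rightarrow> nat"
  assumes "finite J" "s > 0" "0 \<le> q"
    and "\<And>j. j \<le> 2 * m \<Longrightarrow> k0 - int m + int j \<in> J"
    and "\<And>j. j \<le> 2 * m \<Longrightarrow> q * d \<le> real (n (k0 - int m + int j))"
  shows "q * (\<Sum>j\<le>2 * m. d * logistic_pdf (of_int (k0 - int m + int j) * d) s x) \<le>
    (\<Sum>k\<in>J. real (n k) * logistic_pdf (of_int k * d) s x)"
proof -
  have "q * (\<Sum>j\<le>2 * m. d * logistic_pdf (of_int (k0 - int m + int j) * d) s x) =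
      (\<Sum>j\<le>2 * m. q * d * logistic_pdf (of_int (k0 - int m + int j) * d) s x)"
    by (simp add: sum_distrib_left algebra_simps)
  also have "\<dots> \<le> (\<Sum>j\<le>2 * m. real (n (k0 - int m + int j)) *
      logistic_pdf (of_int (k0 - int m + int j) * d) s x)"
    using assms(5) logistic_pdf_pos[OF assms(2)]
    by (intro sum_mono mult_right_mono) (auto simp: less_imp_le)
  also have "\<dots> \<le> (\<Sum>k\<in>J. real (n k) * logistic_pdf (of_int k * d) s x)"
    using assms(1,4) logistic_pdf_pos[OF assms(2)]
    by (intro sum_window_le_sum) (auto simp: less_imp_le)
  finally show ?thesis .
qed

lemma logistic_mixture_ge_density:
  fixes X :: "real set" and p :: "real \<Rightarrow> real"
  assumes "compact X" "continuous_on X p" "\<delta> > 0" "\<And>x. x \<in> X \<Longrightarrow> \<delta> \<le> p x"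
    and "p integrable_on X" "integral X p = 1" "0 < \<eta>" "\<eta> \<le> 1 / 6"
  obtains N s mu where "N \<ge> 1" "s > 0"
    "\<And>x. x \<in> X \<Longrightarrow> (1 - 6 * \<eta>) * p x \<le> logistic_mixture N mu (\<lambda>_. s) x"
proof -
  have p_pos: "p x > 0" if "x \<in> X" for x
    using assms(3,4) that by (meson less_le_trans)
  obtain A m where A: "A > 0" and kernel_sum: "\<And>d x. d > 0 \<Longrightarrow> 1 - 2 * \<eta> \<le>
      (\<Sum>j\<le>2 * m. d * logistic_pdf (of_int (\<lfloor>x / d\<rfloor> - int m + int j) * d) (A * d) x)"
    using exists_logistic_window[OF assms(7)] by blast
  obtain d J z where d: "d > 0" and J: "finite J" and z: "\<And>k. k \<in> J \<Longrightarrow> z k \<in> X"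
    and window: "\<And>x j. x \<in> X \<Longrightarrow> j \<le> 2 * m \<Longrightarrow> \<lfloor>x / d\<rfloor> - int m + int j \<in> J"
    and sample: "\<And>x j. x \<in> X \<Longrightarrow> j \<le> 2 * m \<Longrightarrow>
      (1 - \<eta>) * p x \<le> p (z (\<lfloor>x / d\<rfloor> - int m + int j))"
    and sample_sum: "d * (\<Sum>k\<in>J. p (z k)) \<le> 1 + 2 * \<eta>"
    using exists_sampling_grid[OF assms(1-7), of m] by blast
  have "X \<noteq> {}" using assms(6) by auto
  then have "J \<noteq> {}" using window[of _ 0] by blast
  have weights_pos: "0 < d * p (z k)" if "k \<in> J" for k
    using d p_pos[OF z[OF that]] by simp
  define s where "s = A * d"
  have s: "s > 0" using A d by (simp add: s_def)
  obtain N M n mu where N_ge: "N \<ge> 1" and M: "M > 0"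
    and n: "\<And>k. k \<in> J \<Longrightarrow> M * (d * p (z k)) \<le> real (n k)"
    and N_le: "real N \<le> M * ((\<Sum>k\<in>J. d * p (z k)) + \<eta>)"
    and mixture: "\<And>x. real N * logistic_mixture N mu (\<lambda>_. s) x =
      (\<Sum>k\<in>J. real (n k) * logistic_pdf (of_int k * d) s x)"
    using logistic_mixture_realizing_weights[where w = "\<lambda>k. d * p (z k)" and c = "\<lambda>k. of_int k * d",
        OF J \<open>J \<noteq> {}\<close> assms(7) weights_pos]
    by blast
  have N_pos: "0 < real N" using N_ge by simp
  have "M * ((\<Sum>k\<in>J. d * p (z k)) + \<eta>) \<le> M * (1 + 3 * \<eta>)"
    using sample_sum M by (intro mult_left_mono) (auto simp: sum_distrib_left[symmetric])
  with N_le have N_le: "real N \<le> M * (1 + 3 * \<eta>)"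
    by linarith
  have "(1 - 6 * \<eta>) * p x \<le> logistic_mixture N mu (\<lambda>_. s) x" if x: "x \<in> X" for x
  proof -
    have "M * (1 - \<eta>) * p x * (1 - 2 * \<eta>) \<le>
        M * (1 - \<eta>) * p x * (\<Sum>j\<le>2 * m. d * logistic_pdf (of_int (\<lfloor>x / d\<rfloor> - int m + int j) * d) s x)"
      using kernel_sum[OF d, of x] M assms(8) p_pos[OF x] unfolding s_def
      by (intro mult_left_mono) auto
    also have "\<dots> \<le> (\<Sum>k\<in>J. real (n k) * logistic_pdf (of_int k * d) s x)"
    proof (rule weighted_kernel_sum_ge_window[OF J s])
      show "0 \<le> M * (1 - \<eta>) * p x" using M assms(8) p_pos[OF x] by simp
      show "M * (1 - \<eta>) * p x * d \<le> real (n (\<lfloor>x / d\<rfloor> - int m + int j))" if "j \<le> 2 * m" for j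
        using n[OF window[OF x that]] sample[OF x that] M d
        by (smt (verit) mult_left_mono mult.commute mult.assoc)
    qed (use window[OF x] in auto)
    also have "\<dots> = real N * logistic_mixture N mu (\<lambda>_. s) x"
      by (rule mixture[symmetric])
    finally have "M * ((1 - \<eta>) * (1 - 2 * \<eta>) * p x) \<le> real N * logistic_mixture N mu (\<lambda>_. s) x"
      by (simp add: algebra_simps)
    with assms(7,8) p_pos[OF x] M N_pos N_le show ?thesis
      by (intro lower_bound_after_normalization) auto
  qed
  then show ?thesis using N_ge s that by blast
qed

lemma logistic_mixture_approx_from_below:
  fixes X :: "real set" and p :: "real \<Rightarrow> real"
  assumes "compact X" "continuous_on X p" "\<delta> > 0" "\<And>x. x \<in> X \<Longrightarrow> \<delta> \<le> p x"
    and "p integrable_on X" "integral X p = 1" "c < 1"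
  obtains N s mu where "N \<ge> 1" "s > 0"
    "\<And>x. x \<in> X \<Longrightarrow> c * p x \<le> logistic_mixture N mu (\<lambda>_. s) x"
proof -
  define \<eta> where "\<eta> = min (1 / 6) ((1 - c) / 6)"
  have "\<eta> \<le> (1 - c) / 6" unfolding \<eta>_def by (rule min.cobounded2)
  then have \<eta>: "0 < \<eta>" "\<eta> \<le> 1 / 6" "c \<le> 1 - 6 * \<eta>"
    using assms(7) by (auto simp: \<eta>_def)
  obtain N s mu where "N \<ge> 1" "s > 0"
    and lower: "\<And>x. x \<in> X \<Longrightarrow> (1 - 6 * \<eta>) * p x \<le> logistic_mixture N mu (\<lambda>_. s) x"
    using logistic_mixture_ge_density[OF assms(1-6) \<eta>(1,2)] by blast
  moreover have "c * p x \<le> (1 - 6 * \<eta>) * p x" if "x \<in> X" for x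
    using \<eta>(3) assms(3) assms(4)[OF that] by (intro mult_right_mono) auto
  ultimately show ?thesis using that by (meson order_trans)
qed

lemma relative_entropy_le_neg_ln:
  fixes X :: "real set" and p f :: "real \<Rightarrow> real"
  assumes "compact X" "continuous_on X p" "continuous_on X f" "\<And>x. x \<in> X \<Longrightarrow> 0 < p x"
    and "p integrable_on X" "integral X p = 1" "c > 0" "\<And>x. x \<in> X \<Longrightarrow> c * p x \<le> f x"
  shows "(\<lambda>x. p x * ln (p x / f x)) integrable_on X"
    and "integral X (\<lambda>x. p x * ln (p x / f x)) \<le> - ln c"
proof -
  have f_pos: "f x > 0" if "x \<in> X" for x
    using mult_pos_pos[OF assms(7) assms(4)[OF that]] assms(8)[OF that] by linarith
  have continuous: "continuous_on X (\<lambda>x. p x * ln (p x / f x))"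
    by (intro continuous_intros assms(2,3)) (use f_pos assms(4) in fastforce)+
  show integrable: "(\<lambda>x. p x * ln (p x / f x)) integrable_on X"
    using borel_integrable_compact[OF assms(1) continuous]
    by (intro set_borel_integral_eq_integral(1)) (simp add: set_integrable_def)
  have "p x * ln (p x / f x) \<le> - ln c * p x" if x: "x \<in> X" for x
  proof -
    have "p x / f x \<le> 1 / c"
      using assms(4)[OF x] assms(7) assms(8)[OF x] f_pos[OF x]
      by (simp add: divide_le_eq field_simps)
    then have "ln (p x / f x) \<le> ln (1 / c)"
      using assms(4)[OF x] assms(7) f_pos[OF x] by (simp add: ln_le_cancel_iff)
    also have "ln (1 / c) = - ln c"
      using assms(7) by (simp add: ln_div)
    finally have "ln (p x / f x) \<le> - ln c" .
    then show ?thesis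
      using mult_left_mono[of _ _ "p x"] assms(4)[OF x] by (fastforce simp: algebra_simps)
  qed
  then have "integral X (\<lambda>x. p x * ln (p x / f x)) \<le> integral X (\<lambda>x. - ln c * p x)"
    using integrable assms(5) by (intro integral_le integrable_on_mult_right) auto
  also have "\<dots> = - ln c"
    using assms(6) by simp
  finally show "integral X (\<lambda>x. p x * ln (p x / f x)) \<le> - ln c" .
qed

theorem mainTheorem2:
  fixes X :: "real set" and p :: "real \<Rightarrow> real" and \<delta> :: real
  assumes "compact X"
    and "continuous_on X p"
    and "\<And>x. x \<in> X \<Longrightarrow> p x \<ge> 0"
    and "p integrable_on X"
    and "integral X p = 1"
    and "\<delta> > 0"
    and "(INF x\<in>X. p x) > \<delta>"
  shows "\<forall>\<epsilon>>0. \<exists>N::nat. N \<ge> 1 \<and> (\<exists>mu s :: nat \<Rightarrow> real. (\<forall>i\<in>{1..N}. s i > 0) \<and>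
           (\<lambda>x. p x * ln (p x / logistic_mixture N mu s x)) integrable_on X \<and>
           integral X (\<lambda>x. p x * ln (p x / logistic_mixture N mu s x)) < \<epsilon>)"
proof (intro allI impI)
  fix \<epsilon> :: real assume "\<epsilon> > 0"
  have "bdd_below (p ` X)"
    using assms(3) by (rule bdd_belowI2)
  then have p_ge: "\<delta> \<le> p x" if "x \<in> X" for x
    using cINF_lower[OF _ that] assms(7) by fastforce
  have p_pos: "0 < p x" if "x \<in> X" for x
    using p_ge[OF that] assms(6) by linarith
  have "exp (- \<epsilon> / 2) < 1" using \<open>\<epsilon> > 0\<close> by simp
  then obtain N s mu where N: "N \<ge> 1" and s: "s > 0"
    and lower: "\<And>x. x \<in> X \<Longrightarrow> exp (- \<epsilon> / 2) * p x \<le> logistic_mixture N mu (\<lambda>_. s) x"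
    using logistic_mixture_approx_from_below[OF assms(1,2,6) p_ge assms(4,5)] by blast
  have "continuous_on X (logistic_mixture N mu (\<lambda>_. s))"
    using s by (intro continuous_on_logistic_mixture)
  note relative_entropy =
    relative_entropy_le_neg_ln[OF assms(1,2) this p_pos assms(4,5) exp_gt_zero lower]
  have "integral X (\<lambda>x. p x * ln (p x / logistic_mixture N mu (\<lambda>_. s) x)) < \<epsilon>"
    using relative_entropy(2) \<open>\<epsilon> > 0\<close> by simp
  with relative_entropy(1) N s show "\<exists>N::nat. N \<ge> 1 \<and> (\<exists>mu s :: nat \<Rightarrow> real. (\<forall>i\<in>{1..N}. s i > 0) \<and>
      (\<lambda>x. p x * ln (p x / logistic_mixture N mu s x)) integrable_on X \<and>
      integral X (\<lambda>x. p x * ln (p x / logistic_mixture N mu s x)) < \<epsilon>)"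
    by (intro exI[of _ N] conjI exI[of _ mu] exI[of _ "\<lambda>_. s"]) auto
qed

end
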